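(* For every integer $r\ge1$, writing $\zeta_r(0|z)=\zeta(0,\ldots,0|z)$ ($r$ zeros), \[ \zeta_r(0|1)=\frac{(-1)^r}{r+1}\qquad\text{and}\qquad\zeta_r(0|0)=\frac{(-1)^{r+1}}{r(r+1)}. \]
   Context: Normalized multiple Bernoulli polynomials: for integers $k\ge0$, $\zeta(-k|z)=-\frac{B_{k+1}(z)}{k+1}$ ($B_n(z)$ the Bernoulli polynomials, $B_n=B_n(0)$), and for $r\ge2$, $k_j\ge0$, $\zeta(-k_1,\ldots,-k_r|z)=-\frac{1}{k_r+1}\zeta(-k_1,\ldots,-k_{r-2},-k_{r-1}-k_r-1|z)-\frac12\zeta(-k_1,\ldots,-k_{r-2},-k_{r-1}-k_r|z)+\sum_{q=1}^{k_r}(-k_r)_q\frac{B_{q+1}}{(q+1)!}\zeta(-k_1,\ldots,-k_{r-2},-k_{r-1}-k_r+q|z)$, with $(a)_q=a(a+1)\cdots(a+q-1)$ (for $r=2$ the prefix is empty). *)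

theory Defs
  imports Complex_Main
begin

text \<open>Bernoulli numbers with the convention B_1 = -1/2, defined by the standard
recurrence: B_0 = 1 and, for n >= 1, sum_{k=0}^{n} (n+1 choose k) B_k = 0.\<close>

function bernoulli :: "nat \<Rightarrow> real" where
  "bernoulli n = (if n = 0 then 1
     else - (\<Sum>k<n. of_nat (Suc n choose k) * bernoulli k) / of_nat (Suc n))"
  by auto
termination by (relation "measure id") auto

definition bernpoly :: "nat \<Rightarrow> real \<Rightarrow> real" where
  "bernpoly n z = (\<Sum>k\<le>n. of_nat (n choose k) * bernoulli k * z ^ (n - k))"

text \<open>Normalized multiple Bernoulli polynomials zeta(-k_1,...,-k_r | z).
  The auxiliary function takes the index list in reversed order
  [k_r, k_(r-1), ..., k_1], so that the recursion acts on the head.\<close>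

fun mbp_rev :: "nat list \<Rightarrow> real \<Rightarrow> real" where
  "mbp_rev [] z = 0"
| "mbp_rev [k] z = - bernpoly (Suc k) z / of_nat (Suc k)"
| "mbp_rev (kr # kr1 # ks) z =
     - (1 / of_nat (Suc kr)) * mbp_rev ((kr1 + kr + 1) # ks) z
     - (1/2) * mbp_rev ((kr1 + kr) # ks) z
     + (\<Sum>q=1..kr. pochhammer (- of_nat kr) q * bernoulli (Suc q) / fact (Suc q)
                    * mbp_rev ((kr1 + kr - q) # ks) z)"

text \<open>mbp [k_1,...,k_r] z = zeta(-k_1,...,-k_r | z) for r >= 1.\<close>

definition mbp :: "nat list \<Rightarrow> real \<Rightarrow> real" where
  "mbp ks z = mbp_rev (rev ks) z"

end

(*
  Write G_m(t) = \<Sum>_k \<zeta>(0,...,0,-k|z) t^k/k! (m zeros) for the exponential generating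
  functions. The defining recursion becomes G_(m+1) = S G_m with S F = -(A F - F(0))/t, where
  A(t) = t/(1 - e^(-t)) is the generating function of (-1)^n B_n. At z = 1 the initial series is
  G_0 = S 1 and at z = 0 it is G_0 = S 1 + 1, so both values reduce to c_n = (S^n 1)(0).
  With u = e^(-t) - 1 one has t u S F = F(0) u + t F, hence t u^n S^n 1 = t + \<Sum>_(j<n) c_j u^(j+1).
  The left side vanishes to order n + 1, so the c_j are the coefficients of -t = log (1 + u)
  in powers of u, that is c_j = (-1)^j/(j+1).
*)

theory Submission
  imports Defs "HOL-Computational_Algebra.Formal_Power_Series"
begin

unbundle fps_syntax

declare bernoulli.simps [simp del]

lemma fps_const_neg_one: "fps_const (-1) = (-1 :: 'a::ring_1 fps)"
  by (metis fps_const_neg fps_const_1_eq_1)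

lemma fps_exp_minus_one_nonzero:
  assumes "c \<noteq> 0"
  shows "fps_exp c - 1 \<noteq> (0 :: 'a::field_char_0 fps)"
proof
  assume "fps_exp c - 1 = 0"
  then have "(fps_exp c - 1) $ 1 = 0" by simp
  with assms show False by simp
qed

lemma fps_X_mult_power_mult_nth_self:
  fixes f g :: "'a::comm_semiring_1 fps"
  assumes "f $ 0 = 0"
  shows "(fps_X * f ^ n * g) $ n = 0"
proof (cases n)
  case (Suc m)
  have "(f ^ n * g) $ m = 0"
    using startsby_zero_power_prefix[OF assms, of n] Suc by (simp add: fps_mult_nth)
  then show ?thesis
    using Suc by (simp add: fps_X_mult_nth mult.assoc)
qed simp

lemma fps_power_expansion_unique:
  fixes f :: "'a::idom fps"
  assumes f0: "f $ 0 = 0" and f1: "f $ 1 \<noteq> 0"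
    and eq: "\<And>n. (\<Sum>j<n. fps_const (a j) * f ^ Suc j) $ n = (\<Sum>j<n. fps_const (b j) * f ^ Suc j) $ n"
  shows "a = b"
proof
  fix n
  show "a n = b n"
  proof (induction n rule: less_induct)
    case (less n)
    have "(\<Sum>j<n. a j * (f ^ Suc j) $ Suc n) = (\<Sum>j<n. b j * (f ^ Suc j) $ Suc n)"
      using less.IH by simp
    with eq[of "Suc n"] have "a n * (f ^ Suc n) $ Suc n = b n * (f ^ Suc n) $ Suc n"
      by (simp add: fps_sum_nth)
    moreover have "(f ^ Suc n) $ Suc n \<noteq> 0"
      using f1 by (simp only: startsby_zero_power_nth_same[OF f0]) simp
    ultimately show ?case
      by simp
  qed
qed

lemma pochhammer_neg_of_nat:
  assumes "q \<le> k"
  shows "pochhammer (- of_nat k :: real) q = (-1) ^ q * fact k / fact (k - q)"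
proof -
  have "of_nat (k choose q) = (-1) ^ q * pochhammer (- of_nat k :: real) q / fact q"
    by (simp add: binomial_gbinomial gbinomial_pochhammer)
  then show ?thesis
    using assms by (simp add: binomial_fact field_simps)
qed

lemma bernoulli_0 [simp]: "bernoulli 0 = 1"
  by (simp add: bernoulli.simps)

lemma bernoulli_1: "bernoulli 1 = - 1 / 2"
  by (simp add: bernoulli.simps)

lemma sum_binomial_bernoulli:
  assumes "n \<ge> 1"
  shows "(\<Sum>k<n. of_nat (n choose k) * bernoulli k) = (if n = 1 then 1 else 0)"
proof (cases "n = 1")
  case False
  then obtain m where n: "n = Suc m" and "m \<ge> 1"
    using assms by (cases n) auto
  then have "bernoulli m * of_nat (Suc m) = - (\<Sum>k<m. of_nat (Suc m choose k) * bernoulli k)"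
    by (subst bernoulli.simps) (simp del: of_nat_Suc)
  then show ?thesis
    using False by (simp add: n mult.commute del: of_nat_Suc)
qed (simp add: bernoulli.simps)

definition bernoulli_egf :: "real \<Rightarrow> real fps" where
  "bernoulli_egf c = Abs_fps (\<lambda>n. c ^ n * bernoulli n / fact n)"

lemma bernoulli_egf_nth [simp]: "bernoulli_egf c $ n = c ^ n * bernoulli n / fact n"
  by (simp add: bernoulli_egf_def)

lemma bernoulli_egf_mult_exp: "bernoulli_egf c * (fps_exp c - 1) = fps_const c * fps_X"
proof (rule fps_ext)
  fix n
  show "(bernoulli_egf c * (fps_exp c - 1)) $ n = (fps_const c * fps_X) $ n"
  proof (cases "n = 0")
    case False
    have "(bernoulli_egf c * (fps_exp c - 1)) $ n
        = (\<Sum>k<n. c ^ k * bernoulli k * c ^ (n - k) / (fact (n - k) * fact k))"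
      using False
      by (simp add: fps_mult_nth atLeast0AtMost lessThan_Suc_atMost[symmetric] sum.lessThan_Suc)
    also have "\<dots> = c ^ n / fact n * (\<Sum>k<n. of_nat (n choose k) * bernoulli k)"
      unfolding sum_distrib_left
    proof (rule sum.cong [OF refl])
      fix k assume "k \<in> {..<n}"
      then have "k \<le> n" by simp
      then show "c ^ k * bernoulli k * c ^ (n - k) / (fact (n - k) * fact k)
          = c ^ n / fact n * (of_nat (n choose k) * bernoulli k)"
        by (simp add: binomial_fact field_simps flip: power_add)
    qed
    also have "\<dots> = (fps_const c * fps_X) $ n"
      using False sum_binomial_bernoulli[of n] by (cases "n = 1") simp_all
    finally show ?thesis .
  qed simp
qed

lemma bernoulli_egf_neg_one: "bernoulli_egf (-1) = bernoulli_egf 1 * fps_exp 1"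
proof -
  have exp_inv: "fps_exp 1 * fps_exp (-1) = (1 :: real fps)"
    by (simp flip: fps_exp_add_mult)
  have "bernoulli_egf 1 * fps_exp 1 * (fps_exp (-1) - 1)
      = - (bernoulli_egf 1 * (fps_exp 1 - 1))"
    by (simp add: right_diff_distrib mult.assoc exp_inv)
  also have "\<dots> = bernoulli_egf (-1) * (fps_exp (-1) - 1)"
    using bernoulli_egf_mult_exp[of 1] bernoulli_egf_mult_exp[of "-1"]
    by (simp only: fps_const_1_eq_1 fps_const_neg_one) simp
  finally show ?thesis
    using fps_exp_minus_one_nonzero[of "-1"] by (simp only: mult_cancel_right) simp
qed

lemma bernoulli_egf_one: "bernoulli_egf 1 = bernoulli_egf (-1) - fps_X"
proof -
  have B: "bernoulli_egf 1 * (fps_exp 1 - 1) = fps_X"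
    using bernoulli_egf_mult_exp[of 1] by simp
  have "(bernoulli_egf (-1) - fps_X) * (fps_exp 1 - 1)
      = fps_exp 1 * (bernoulli_egf 1 * (fps_exp 1 - 1)) - fps_X * (fps_exp 1 - 1)"
    by (simp add: bernoulli_egf_neg_one algebra_simps)
  also have "\<dots> = bernoulli_egf 1 * (fps_exp 1 - 1)"
    by (simp only: B) (simp add: algebra_simps)
  finally show ?thesis
    using fps_exp_minus_one_nonzero[of 1] by (simp only: mult_cancel_right) simp
qed

lemma bernpoly_egf: "Abs_fps (\<lambda>n. bernpoly n z / fact n) = bernoulli_egf 1 * fps_exp z"
proof (rule fps_ext)
  fix n
  have "bernpoly n z / fact n = (\<Sum>k\<le>n. bernoulli k / fact k * (z ^ (n - k) / fact (n - k)))"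
    unfolding bernpoly_def sum_divide_distrib
    by (intro sum.cong refl) (simp add: binomial_fact)
  then show "Abs_fps (\<lambda>n. bernpoly n z / fact n) $ n = (bernoulli_egf 1 * fps_exp z) $ n"
    by (simp add: fps_mult_nth atLeast0AtMost)
qed

text \<open>\<open>zeta_zeros z m k\<close> is \<open>\<zeta>(0,...,0,-k|z)\<close> with \<open>m\<close> zeros in front of \<open>-k\<close>.\<close>

definition zeta_zeros :: "real \<Rightarrow> nat \<Rightarrow> nat \<Rightarrow> real" where
  "zeta_zeros z m k = mbp_rev (k # replicate m 0) z"

lemma zeta_zeros_0: "zeta_zeros z 0 k = - bernpoly (Suc k) z / of_nat (Suc k)"
  by (simp add: zeta_zeros_def)

text \<open>The term \<open>-(1/2) \<zeta>(\<dots>, -k|z)\<close> of the recursion is the \<open>q = 0\<close> summand, as \<open>B\<^sub>1 = -1/2\<close>.\<close>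

lemma zeta_zeros_Suc:
  "zeta_zeros z (Suc m) k = - zeta_zeros z m (Suc k) / of_nat (Suc k)
     + (\<Sum>q\<le>k. pochhammer (- of_nat k) q * bernoulli (Suc q) / fact (Suc q) * zeta_zeros z m (k - q))"
proof -
  have "(\<Sum>q\<le>k. pochhammer (- of_nat k) q * bernoulli (Suc q) / fact (Suc q) * zeta_zeros z m (k - q))
      = - (1/2) * zeta_zeros z m k
        + (\<Sum>q=1..k. pochhammer (- of_nat k) q * bernoulli (Suc q) / fact (Suc q) * zeta_zeros z m (k - q))"
    by (simp add: atMost_atLeast0 sum.atLeast_Suc_atMost bernoulli_1 [simplified])
  then show ?thesis
    by (simp add: zeta_zeros_def)
qed

definition zeta_zeros_egf :: "real \<Rightarrow> nat \<Rightarrow> real fps" where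
  "zeta_zeros_egf z m = Abs_fps (\<lambda>k. zeta_zeros z m k / fact k)"

definition zeta_step :: "real fps \<Rightarrow> real fps" where
  "zeta_step F = - fps_shift 1 (bernoulli_egf (-1) * F)"

lemma zeta_step_add: "zeta_step (F + G) = zeta_step F + zeta_step G"
  by (simp add: zeta_step_def distrib_left fps_shift_add)

lemma zeta_zeros_egf_Suc: "zeta_zeros_egf z (Suc m) = zeta_step (zeta_zeros_egf z m)"
proof (rule fps_ext)
  fix k
  let ?G = "zeta_zeros_egf z m" and ?A = "bernoulli_egf (-1)"
  have summand: "pochhammer (- of_nat k) q * bernoulli (Suc q) / fact (Suc q) * zeta_zeros z m (k - q) / fact k
      = - (?A $ Suc q * ?G $ (k - q))" if "q \<in> {..k}" for q
    using that by (simp add: pochhammer_neg_of_nat zeta_zeros_egf_def field_simps del: fact_Suc)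
  have "zeta_zeros_egf z (Suc m) $ k
      = - ?G $ Suc k + (\<Sum>q\<le>k. pochhammer (- of_nat k) q * bernoulli (Suc q) / fact (Suc q)
                                 * zeta_zeros z m (k - q) / fact k)"
    by (simp add: zeta_zeros_egf_def zeta_zeros_Suc add_divide_distrib diff_divide_distrib sum_divide_distrib)
  also have "\<dots> = - (?G $ Suc k + (\<Sum>q\<le>k. ?A $ Suc q * ?G $ (k - q)))"
    by (simp only: sum.cong [OF refl summand] sum_negf) simp
  also have "\<dots> = zeta_step ?G $ k"
    by (simp add: zeta_step_def fps_mult_nth atLeast0AtMost sum.atMost_Suc_shift del: sum.atMost_Suc)
  finally show "zeta_zeros_egf z (Suc m) $ k = zeta_step ?G $ k" .
qed

lemma zeta_zeros_egf_0: "zeta_zeros_egf z 0 = - fps_shift 1 (bernoulli_egf 1 * fps_exp z)"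
proof (rule fps_ext)
  fix k
  have "bernpoly (Suc k) z / fact (Suc k) = (bernoulli_egf 1 * fps_exp z) $ Suc k"
    using fps_nth_Abs_fps bernpoly_egf by metis
  then show "zeta_zeros_egf z 0 $ k = (- fps_shift 1 (bernoulli_egf 1 * fps_exp z)) $ k"
    by (simp add: zeta_zeros_egf_def zeta_zeros_0 field_simps del: of_nat_Suc)
qed

lemma zeta_zeros_egf_at_1: "zeta_zeros_egf 1 m = (zeta_step ^^ Suc m) 1"
proof (induction m)
  case 0
  show ?case
    by (simp add: zeta_zeros_egf_0 zeta_step_def bernoulli_egf_neg_one)
qed (simp add: zeta_zeros_egf_Suc)

lemma zeta_zeros_egf_at_0: "zeta_zeros_egf 0 m = (zeta_step ^^ Suc m) 1 + (zeta_step ^^ m) 1"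
proof (induction m)
  case 0
  show ?case
    by (simp add: zeta_zeros_egf_0 zeta_step_def bernoulli_egf_one algebra_simps fps_shift_diff)
qed (simp add: zeta_zeros_egf_Suc zeta_step_add)

lemma mbp_replicate_zero: "mbp (replicate (Suc m) 0) z = zeta_zeros_egf z m $ 0"
  by (simp add: mbp_def zeta_zeros_egf_def zeta_zeros_def replicate_append_same)

lemma fps_X_mult_zeta_step: "fps_X * zeta_step F = fps_const (F $ 0) - bernoulli_egf (-1) * F"
proof (rule fps_ext)
  fix n
  show "(fps_X * zeta_step F) $ n = (fps_const (F $ 0) - bernoulli_egf (-1) * F) $ n"
  proof (cases n)
    case 0
    then show ?thesis by (simp add: fps_mult_nth)
  next
    case (Suc m)
    then show ?thesis by (simp add: zeta_step_def fps_X_mult_nth)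
  qed
qed

lemma fps_X_mult_exp_minus_one_mult_zeta_step:
  "fps_X * (fps_exp (-1) - 1) * zeta_step F = fps_const (F $ 0) * (fps_exp (-1) - 1) + fps_X * F"
proof -
  define u where "u = fps_exp (-1) - (1 :: real fps)"
  have A: "bernoulli_egf (-1) * u = - fps_X"
    using bernoulli_egf_mult_exp[of "-1"] by (simp only: u_def fps_const_neg_one) simp
  have "fps_X * u * zeta_step F = u * (fps_X * zeta_step F)"
    by (simp only: mult_ac)
  also have "\<dots> = fps_const (F $ 0) * u - (bernoulli_egf (-1) * u) * F"
    by (simp only: fps_X_mult_zeta_step right_diff_distrib mult_ac)
  also have "\<dots> = fps_const (F $ 0) * u + fps_X * F"
    by (simp only: A) simp
  finally show ?thesis
    by (simp only: u_def)
qed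

lemma zeta_step_iterate_expansion:
  "fps_X * (fps_exp (-1) - 1) ^ n * (zeta_step ^^ n) 1
     = fps_X + (\<Sum>j<n. fps_const (((zeta_step ^^ j) 1) $ 0) * (fps_exp (-1) - 1) ^ Suc j)"
proof -
  define u where "u = fps_exp (-1) - (1 :: real fps)"
  have step: "fps_X * u * zeta_step F = fps_const (F $ 0) * u + fps_X * F" for F
    unfolding u_def by (rule fps_X_mult_exp_minus_one_mult_zeta_step)
  have "fps_X * u ^ n * (zeta_step ^^ n) 1
      = fps_X + (\<Sum>j<n. fps_const (((zeta_step ^^ j) 1) $ 0) * u ^ Suc j)"
  proof (induction n)
    case (Suc n)
    let ?P = "(zeta_step ^^ n) 1"
    have "fps_X * u ^ Suc n * (zeta_step ^^ Suc n) 1 = u ^ n * (fps_X * u * zeta_step ?P)"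
      by (simp add: mult_ac)
    also have "\<dots> = fps_const (?P $ 0) * u ^ Suc n + fps_X * u ^ n * ?P"
      by (simp only: step) (simp add: algebra_simps)
    finally show ?case
      by (simp add: Suc.IH)
  qed simp
  then show ?thesis
    by (simp only: u_def)
qed

text \<open>Truncations of \<open>log (1 + u) = -t\<close> for \<open>u = e\<^sup>-\<^sup>t - 1\<close>; differentiating uses \<open>u' = -(1 + u)\<close>.\<close>

lemma log_exp_neg_coeff:
  "(fps_X + (\<Sum>j<n. fps_const ((-1) ^ j / of_nat (Suc j)) * (fps_exp (-1) - 1) ^ Suc j)) $ n
     = (0 :: real)"
proof (cases n)
  case (Suc m)
  define u where "u = fps_exp (-1) - (1 :: real fps)"
  define L where "L = fps_X + (\<Sum>j<n. fps_const ((-1) ^ j / of_nat (Suc j)) * u ^ Suc j)"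
  have u0: "(- u) $ 0 = 0"
    by (simp add: u_def)
  have du: "fps_deriv u = - (1 + u)"
    by (simp add: u_def fps_const_neg_one)
  have summand: "fps_deriv (fps_const ((-1) ^ j / of_nat (Suc j)) * u ^ Suc j) = - ((1 + u) * (- u) ^ j)"
    for j
  proof -
    have "fps_deriv (fps_const ((-1) ^ j / of_nat (Suc j)) * u ^ Suc j)
        = fps_const ((-1) ^ j / of_nat (Suc j) * of_nat (Suc j)) * fps_deriv u * u ^ j"
      by (simp only: fps_deriv_mult_const_left fps_deriv_power diff_Suc_1 mult.assoc flip: fps_const_mult)
    also have "\<dots> = (-1) ^ j * - (1 + u) * u ^ j"
      by (simp add: du fps_const_neg_one del: of_nat_Suc flip: fps_const_power)
    also have "\<dots> = - ((1 + u) * ((-1) ^ j * u ^ j))"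
      by (simp only: mult_minus_left mult_minus_right mult_ac)
    finally show ?thesis
      by (simp only: power_minus [of u])
  qed
  have "fps_deriv L = 1 - (1 - (- u)) * (\<Sum>j<n. (- u) ^ j)"
    by (simp only: L_def fps_deriv_add fps_deriv_sum summand sum_negf sum_distrib_left) simp
  also have "\<dots> = (- u) ^ n"
    by (simp only: one_diff_power_eq [symmetric]) simp
  finally have "fps_deriv L $ m = ((- u) ^ n) $ m"
    by (rule arg_cong)
  also have "\<dots> = 0"
    using startsby_zero_power_prefix[OF u0, of n] Suc by simp
  finally have "L $ n = 0"
    unfolding fps_deriv_nth Suc by (simp del: of_nat_Suc)
  then show ?thesis
    by (simp only: L_def u_def)
qed simp

lemma zeta_step_iterate_nth_0: "((zeta_step ^^ n) 1) $ 0 = (-1) ^ n / of_nat (Suc n)"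
proof -
  let ?u = "fps_exp (-1) - 1 :: real fps"
  have "(\<lambda>j. ((zeta_step ^^ j) 1) $ 0) = (\<lambda>j. (-1) ^ j / of_nat (Suc j))"
  proof (rule fps_power_expansion_unique)
    fix n
    have "(fps_X * ?u ^ n * (zeta_step ^^ n) 1) $ n = 0"
      by (rule fps_X_mult_power_mult_nth_self) simp
    then have "(fps_X + (\<Sum>j<n. fps_const (((zeta_step ^^ j) 1) $ 0) * ?u ^ Suc j)) $ n = 0"
      by (simp only: zeta_step_iterate_expansion)
    then show "(\<Sum>j<n. fps_const (((zeta_step ^^ j) 1) $ 0) * ?u ^ Suc j) $ n
        = (\<Sum>j<n. fps_const ((-1) ^ j / of_nat (Suc j)) * ?u ^ Suc j) $ n"
      using log_exp_neg_coeff[of n] by simp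
  qed simp_all
  then show ?thesis
    by (rule fun_cong)
qed

theorem proposition3p6:
  fixes r :: nat
  assumes "r \<ge> 1"
  shows "mbp (replicate r 0) 1 = (-1) ^ r / of_nat (r + 1) \<and>
         mbp (replicate r 0) 0 = (-1) ^ (r + 1) / (of_nat r * of_nat (r + 1))"
proof
  obtain m where r: "r = Suc m"
    using assms by (cases r) auto
  show "mbp (replicate r 0) 1 = (-1) ^ r / of_nat (r + 1)"
    unfolding r mbp_replicate_zero zeta_zeros_egf_at_1 zeta_step_iterate_nth_0 by simp
  have "mbp (replicate r 0) 0 = (-1) ^ Suc m / of_nat (Suc (Suc m)) + (-1) ^ m / of_nat (Suc m)"
    unfolding r mbp_replicate_zero zeta_zeros_egf_at_0 fps_add_nth zeta_step_iterate_nth_0 ..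
  also have "\<dots> = (-1) ^ (r + 1) / (of_nat r * of_nat (r + 1))"
    by (simp add: r field_simps)
  finally show "mbp (replicate r 0) 0 = (-1) ^ (r + 1) / (of_nat r * of_nat (r + 1))" .
qed

end
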